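(* If $W$ is a sunword, then $W$ is jump-free.
   Context: Multisuns: a multisun is a graph with no induced $K_4$ minus an edge, of odd order, whose maximal cliques of size $2$ form a Hamiltonian cycle $C$ (the rim); the other maximal cliques consist of pairwise nonconsecutive vertices of $C$ (inscribed cliques). A sub-multisun deletes the edge sets of some, but not all, inscribed cliques. An $AB$-path (inscribed cliques $A,B$, possibly equal) is a subpath of $C$ with one end in $A$, the other in $B$, internal vertices in no inscribed clique; $A$-path $=AA$-path; for $v\in B$ an $Av$-path is an $AB$-path ending at $v$ in $B$. N-conditions: (N1) every $A$-path has an even number $\ge4$ of vertices; (N2) inscribed cliques have odd size; (N3) all inscribed cliques share a vertex $\xi\in V(C)$ and are otherwise disjoint; (N4) every $A\xi$-path has an even number of vertices; (N5) for $A\ne B$ every $AB$-path has an odd number of vertices. A sunoid is a multisun such that it and all its sub-multisuns satisfy the N-conditions. Words: alphabet $\Sigma$ with distinguished letter $\epsilon$; $x^k$ is $k$ copies of $x$. The pattern $\pi(w)$ is obtained by repeatedly deleting $\epsilon\epsilon$. $v\sim w$ if related by cyclic shift and/or reversal; $u\approx v$ iff $\pi(u)\sim\pi(v)$; $[w]$ is the class (cyclic word). For a multisun satisfying the N-conditions, label rim vertices by $\sigma$ (in $\ge2$ inscribed cliques), by a letter specific to $X$ (only in inscribed clique $X$), or $\epsilon$ (in none); reading around the rim gives $w_G$ and $[w_G]$ is its s-word. An s-word is either (i) $[a^\lambda]$ ($\Sigma=\{\epsilon,a\}$, $\lambda$ odd) or (ii) $[\sigma x_{i_1}^{\lambda_1}\epsilon\cdots\epsilon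 x_{i_s}^{\lambda_s}]$ with positive $\lambda_j$, proper letters $x_{i_j}\in\Sigma\setminus\{\epsilon,\sigma\}$, $x_{i_h}\ne x_{i_{h+1}}$, each proper letter's exponents summing to an even number. A sunword is the s-word of a sunoid. Induced order (type (ii)): take a representative $\sigma u$ equal to its own pattern, replace each interval $xx$ of $u$ ($x$ proper) by $x\epsilon\epsilon x$ to get $z$, let $v=\sigma\epsilon\epsilon z\epsilon\epsilon=v_1\cdots v_N$ arranged cyclically; $\sigma$ is least and for proper $x\ne y$, $x\prec y$ iff the least cyclic distance from position $1$ to a position labeled $x$ is smaller than for $y$. Jumps (type (ii)): write $W=[x_{i_0}x_{i_1}^{\lambda_1}\epsilon\cdots\epsilon x_{i_s}^{\lambda_s}]$ with $x_{i_0}=\sigma$. Letters $x\preceq y$ of $\Sigma\setminus\{\epsilon\}$ form a cover pair if no $z\in\Sigma\setminus\{\epsilon\}$, $z\ne x,y$, has $x\prec z\prec y$. A jump is a pair of cyclically consecutive letters $x_{i_h},x_{i_{h+1}}$ ($h=0,\dots,s$, indices mod $s+1$) not forming a cover pair; $W$ is jump-free if it has no jump. An s-word of type (i) has no jumps. *)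

theory Defs
  imports Main
begin

definition sgraph :: "'v set \<Rightarrow> ('v \<Rightarrow> 'v \<Rightarrow> bool) \<Rightarrow> bool" where
  "sgraph V E \<longleftrightarrow> finite V \<and> (\<forall>x y. E x y \<longrightarrow> x \<in> V \<and> y \<in> V \<and> x \<noteq> y \<and> E y x)"

definition clique :: "'v set \<Rightarrow> ('v \<Rightarrow> 'v \<Rightarrow> bool) \<Rightarrow> 'v set \<Rightarrow> bool" where
  "clique V E K \<longleftrightarrow> K \<subseteq> V \<and> (\<forall>x\<in>K. \<forall>y\<in>K. x \<noteq> y \<longrightarrow> E x y)"

definition maxclique :: "'v set \<Rightarrow> ('v \<Rightarrow> 'v \<Rightarrow> bool) \<Rightarrow> 'v set \<Rightarrow> bool" where
  "maxclique V E K \<longleftrightarrow> clique V E K \<and> (\<forall>K'. clique V E K' \<and> K \<subseteq> K' \<longrightarrow> K' = K)"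

definition diamond_free :: "'v set \<Rightarrow> ('v \<Rightarrow> 'v \<Rightarrow> bool) \<Rightarrow> bool" where
  "diamond_free V E \<longleftrightarrow> \<not> (\<exists>a\<in>V. \<exists>b\<in>V. \<exists>c\<in>V. \<exists>d\<in>V. distinct [a,b,c,d] \<and>
      E a b \<and> E a c \<and> E a d \<and> E b c \<and> E b d \<and> \<not> E c d)"

text \<open>Hamiltonian cycle of V, given as a list of its vertices in cyclic order.\<close>
definition cyc_edges :: "'v list \<Rightarrow> 'v set set" where
  "cyc_edges cyc = {{cyc ! i, cyc ! ((i + 1) mod length cyc)} | i. i < length cyc}"

definition is_rim :: "'v set \<Rightarrow> ('v \<Rightarrow> 'v \<Rightarrow> bool) \<Rightarrow> 'v list \<Rightarrow> bool" where
  "is_rim V E cyc \<longleftrightarrow> distinct cyc \<and> set cyc = V \<and> 3 \<le> length cyc \<and>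
      {K. maxclique V E K \<and> card K = 2} = cyc_edges cyc"

definition inscr :: "'v set \<Rightarrow> ('v \<Rightarrow> 'v \<Rightarrow> bool) \<Rightarrow> 'v set set" where
  "inscr V E = {K. maxclique V E K \<and> card K \<noteq> 2}"

definition multisun :: "'v set \<Rightarrow> ('v \<Rightarrow> 'v \<Rightarrow> bool) \<Rightarrow> bool" where
  "multisun V E \<longleftrightarrow> sgraph V E \<and> diamond_free V E \<and> odd (card V) \<and>
     (\<exists>cyc. is_rim V E cyc \<and>
        (\<forall>K\<in>inscr V E. \<forall>i < length cyc.
           \<not> (cyc ! i \<in> K \<and> cyc ! ((i + 1) mod length cyc) \<in> K)))"

text \<open>Sub-multisun: delete the edge sets of the inscribed cliques in D.\<close>
definition subE :: "('v \<Rightarrow> 'v \<Rightarrow> bool) \<Rightarrow> 'v set set \<Rightarrow> 'v \<Rightarrow> 'v \<Rightarrow> bool" where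
  "subE E D x y \<longleftrightarrow> E x y \<and> \<not> (\<exists>X\<in>D. x \<in> X \<and> y \<in> X)"

text \<open>The subpath of the rim starting at position i with k vertices (going forward);
  its j-th vertex.\<close>
definition pv :: "'v list \<Rightarrow> nat \<Rightarrow> nat \<Rightarrow> 'v" where
  "pv cyc i j = cyc ! ((i + j) mod length cyc)"

definition end_path :: "'v set set \<Rightarrow> 'v list \<Rightarrow> 'v set \<Rightarrow> 'v set \<Rightarrow> nat \<Rightarrow> nat \<Rightarrow> bool" where
  "end_path I cyc P Q i k \<longleftrightarrow> i < length cyc \<and> 2 \<le> k \<and> k \<le> length cyc \<and>
     ((pv cyc i 0 \<in> P \<and> pv cyc i (k - 1) \<in> Q) \<or> (pv cyc i 0 \<in> Q \<and> pv cyc i (k - 1) \<in> P)) \<and>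
     (\<forall>j. 0 < j \<and> j < k - 1 \<longrightarrow> pv cyc i j \<notin> \<Union> I)"

definition N_conds :: "'v set \<Rightarrow> 'v set set \<Rightarrow> 'v list \<Rightarrow> bool" where
  "N_conds V I cyc \<longleftrightarrow>
     \<comment> \<open>(N1)\<close>
     (\<forall>A\<in>I. \<forall>i k. end_path I cyc A A i k \<longrightarrow> even k \<and> 4 \<le> k) \<and>
     \<comment> \<open>(N2)\<close>
     (\<forall>A\<in>I. odd (card A)) \<and>
     (\<exists>\<xi>\<in>V.
        \<comment> \<open>(N3)\<close>
        (\<forall>A\<in>I. \<xi> \<in> A) \<and> (\<forall>A\<in>I. \<forall>B\<in>I. A \<noteq> B \<longrightarrow> A \<inter> B = {\<xi>}) \<and>
        \<comment> \<open>(N4): A\<xi>-paths (one end in A, the other end the vertex \<xi>)\<close>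
        (\<forall>A\<in>I. \<forall>i k. end_path I cyc A {\<xi>} i k \<longrightarrow> even k)) \<and>
     \<comment> \<open>(N5): AB-paths for A \<noteq> B (ends in A resp. B, not the common vertex)\<close>
     (\<forall>A\<in>I. \<forall>B\<in>I. A \<noteq> B \<longrightarrow> (\<forall>i k. end_path I cyc (A - B) (B - A) i k \<longrightarrow> odd k))"

definition satisfies_N :: "'v set \<Rightarrow> ('v \<Rightarrow> 'v \<Rightarrow> bool) \<Rightarrow> bool" where
  "satisfies_N V E \<longleftrightarrow> (\<forall>cyc. is_rim V E cyc \<longrightarrow> N_conds V (inscr V E) cyc)"

text \<open>Sunoid: the multisun and all its sub-multisuns (D a proper subset of the inscribed
  cliques; D = {} gives the multisun itself) satisfy the N-conditions.\<close>
definition sunoid :: "'v set \<Rightarrow> ('v \<Rightarrow> 'v \<Rightarrow> bool) \<Rightarrow> bool" where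
  "sunoid V E \<longleftrightarrow> multisun V E \<and> (\<forall>D. D \<subset> inscr V E \<longrightarrow> satisfies_N V (subE E D))"

text \<open>Alphabet: \<epsilon>, \<sigma>, and one letter specific to each inscribed clique X.\<close>
datatype 'v letter = Eps | Sig | Lt "'v set"

definition proper :: "'v letter \<Rightarrow> bool" where
  "proper x \<longleftrightarrow> x \<noteq> Eps \<and> x \<noteq> Sig"

text \<open>Pattern: repeatedly delete \<epsilon>\<epsilon> (the normal form is unique; greedy deletion).\<close>
fun pat :: "'v letter list \<Rightarrow> 'v letter list" where
  "pat [] = []"
| "pat (Eps # Eps # xs) = pat xs"
| "pat (x # xs) = x # pat xs"

definition wsim :: "'a list \<Rightarrow> 'a list \<Rightarrow> bool" where
  "wsim u v \<longleftrightarrow> (\<exists>k. v = rotate k u \<or> v = rotate k (rev u))"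

definition wapprox :: "'v letter list \<Rightarrow> 'v letter list \<Rightarrow> bool" where
  "wapprox u v \<longleftrightarrow> wsim (pat u) (pat v)"

definition lab :: "'v set set \<Rightarrow> 'v \<Rightarrow> 'v letter" where
  "lab I v = (if 2 \<le> card {X\<in>I. v \<in> X} then Sig
              else if \<exists>X\<in>I. v \<in> X then Lt (THE X. X \<in> I \<and> v \<in> X) else Eps)"

definition sword :: "'v set \<Rightarrow> ('v \<Rightarrow> 'v \<Rightarrow> bool) \<Rightarrow> 'v letter list set" where
  "sword V E = {u. \<exists>cyc. is_rim V E cyc \<and>
      ((\<exists>v\<in>V. lab (inscr V E) v = Sig) \<longrightarrow> lab (inscr V E) (hd cyc) = Sig) \<and>
      wapprox (map (lab (inscr V E)) cyc) u}"

definition sunword :: "'v letter list set \<Rightarrow> bool" where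
  "sunword W \<longleftrightarrow> (\<exists>V E. sunoid V E \<and> W = sword V E)"

fun ins_eps :: "'v letter list \<Rightarrow> 'v letter list" where
  "ins_eps [] = []"
| "ins_eps [x] = [x]"
| "ins_eps (x # y # xs) =
     (if x = y \<and> proper x then x # Eps # Eps # ins_eps (y # xs) else x # ins_eps (y # xs))"

text \<open>For a representative r = \<sigma>u: v = \<sigma>\<epsilon>\<epsilon>z\<epsilon>\<epsilon>.\<close>
definition vword :: "'v letter list \<Rightarrow> 'v letter list" where
  "vword r = Sig # Eps # Eps # ins_eps (tl r) @ [Eps, Eps]"

text \<open>Least cyclic distance from position 1 (index 0) to a position labelled x.\<close>
definition cdist :: "'v letter list \<Rightarrow> 'v letter \<Rightarrow> nat" where
  "cdist v x = Min {min p (length v - p) | p. p < length v \<and> v ! p = x}"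

definition prec :: "'v letter list \<Rightarrow> 'v letter \<Rightarrow> 'v letter \<Rightarrow> bool" where
  "prec r x y \<longleftrightarrow> (x = Sig \<and> proper y) \<or>
     (proper x \<and> proper y \<and> x \<noteq> y \<and> cdist (vword r) x < cdist (vword r) y)"

text \<open>x \<preceq> y form a cover pair (letters of \<Sigma> \<setminus> {\<epsilon>} = letters of r other than \<epsilon>).\<close>
definition cover_ord :: "'v letter list \<Rightarrow> 'v letter \<Rightarrow> 'v letter \<Rightarrow> bool" where
  "cover_ord r x y \<longleftrightarrow> (x = y \<or> prec r x y) \<and>
     \<not> (\<exists>z \<in> set r - {Eps}. z \<noteq> x \<and> z \<noteq> y \<and> prec r x z \<and> prec r z y)"

definition cover_pair :: "'v letter list \<Rightarrow> 'v letter \<Rightarrow> 'v letter \<Rightarrow> bool" where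
  "cover_pair r x y \<longleftrightarrow> cover_ord r x y \<or> cover_ord r y x"

fun blocks :: "('v letter \<times> nat) list \<Rightarrow> 'v letter list" where
  "blocks [] = []"
| "blocks [(x, l)] = replicate l x"
| "blocks ((x, l) # b # bs) = replicate l x @ Eps # blocks (b # bs)"

text \<open>W is jump-free: for every representative r = \<sigma> x_1^{l_1} \<epsilon> ... \<epsilon> x_s^{l_s} in W
  (proper x_j, positive l_j), with the order induced by r, any two cyclically consecutive
  letters of \<sigma>, x_1, ..., x_s form a cover pair. (Type (i) s-words have no such
  representative and are jump-free, as stipulated.)\<close>
definition jump_free :: "'v letter list set \<Rightarrow> bool" where
  "jump_free W \<longleftrightarrow> (\<forall>r\<in>W. \<forall>bs.
     r = Sig # blocks bs \<and> (\<forall>(x, l) \<in> set bs. proper x \<and> 0 < l) \<longrightarrow>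
     (let xs = Sig # map fst bs in
      \<forall>h \<le> length bs. cover_pair r (xs ! h) (xs ! ((h + 1) mod (length bs + 1)))))"

end

theory Submission
  imports Defs
begin

text \<open>Read the rim from the vertex \<open>\<xi>\<close> shared by all inscribed cliques. Condition (N1) for the
  sub-multisun keeping a single clique \<open>A\<close> says that an occurrence of the letter of \<open>A\<close> preceded
  by \<open>k\<close> others sits at a position of parity \<open>k\<close>, and that the letter occurs an even number of
  times; (N5) for the sub-multisun keeping \<open>A\<close> and \<open>B\<close> says that an odd number of letters
  separates a letter of \<open>A\<close> from the next letter of \<open>B\<close>. Hence in the proper part of the word
  every restriction to two letters has the shape \<open>x (xx | yy)\<^sup>* x\<close>. The letter occurring first
  therefore surrounds the other one and lies closer to \<open>\<sigma>\<close>, so the induced order is the order of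
  first occurrences. If some \<open>z\<close> came between adjacent letters \<open>x\<close> and \<open>y\<close> in this order,
  the number of occurrences of \<open>z\<close> before the pair would have to be odd in the restriction to
  \<open>{x, z}\<close> and even in the restriction to \<open>{z, y}\<close>.\<close>

section \<open>Lists\<close>

lemma filter_eq_appendD:
  "filter P xs = ys @ zs \<Longrightarrow> \<exists>us vs. xs = us @ vs \<and> filter P us = ys \<and> filter P vs = zs"
proof (induction ys arbitrary: xs)
  case Nil
  then have "xs = [] @ xs \<and> filter P [] = [] \<and> filter P xs = zs" by simp
  then show ?case by blast
next
  case (Cons y ys)
  obtain us vs where xs: "xs = us @ y # vs" "\<forall>u\<in>set us. \<not> P u" "P y" "ys @ zs = filter P vs"
    using filter_eq_ConsD[of P xs y "ys @ zs"] Cons.prems by auto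
  obtain us' vs' where "vs = us' @ vs'" "filter P us' = ys" "filter P vs' = zs"
    using Cons.IH[OF xs(4)[symmetric]] by blast
  then have "xs = (us @ y # us') @ vs' \<and> filter P (us @ y # us') = y # ys \<and> filter P vs' = zs"
    using xs by auto
  then show ?case by blast
qed

lemma count_list_filter: "count_list (filter P xs) x = (if P x then count_list xs x else 0)"
  by (induction xs) auto

lemma length_filter_two_letters:
  "x \<noteq> y \<Longrightarrow> length (filter (\<lambda>z. z = x \<or> z = y) xs) = count_list xs x + count_list xs y"
  by (induction xs) auto

lemma map_eq_append_ConsE:
  assumes "map f xs = u @ x # v"
  obtains u' a v' where "xs = u' @ a # v'" "map f u' = u" "f a = x" "map f v' = v"
proof
  have len: "length u < length xs" using arg_cong[OF assms, of length] by simp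
  then show "xs = take (length u) xs @ xs ! length u # drop (Suc (length u)) xs"
    by (rule id_take_nth_drop)
  show "map f (take (length u) xs) = u" using arg_cong[OF assms, of "take (length u)"] by (simp add: take_map)
  show "f (xs ! length u) = x" using arg_cong[OF assms, of "\<lambda>l. l ! length u"] len by simp
  show "map f (drop (Suc (length u)) xs) = v"
    using arg_cong[OF assms, of "drop (Suc (length u))"] by (simp add: drop_map)
qed

lemma map_eq_append_Cons_append_ConsE:
  assumes "map f xs = u @ x # m @ y # v"
  obtains u' a m' b v' where "xs = u' @ a # m' @ b # v'" "map f u' = u" "f a = x" "map f m' = m"
    "f b = y" "map f v' = v"
proof -
  obtain u' a r where "xs = u' @ a # r" "map f u' = u" "f a = x" "map f r = m @ y # v"
    using assms by (rule map_eq_append_ConsE)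
  moreover obtain m' b v' where "r = m' @ b # v'" "map f m' = m" "f b = y" "map f v' = v"
    using calculation(4) by (rule map_eq_append_ConsE)
  ultimately show ?thesis using that by simp
qed

lemma rotate_eq_Cons_unique:
  assumes xs: "xs = u @ y # v" and "y \<notin> set u" "y \<notin> set v" and r: "rotate k xs = y # t"
  shows "t = v @ u"
proof -
  define m where "m = k mod length xs"
  have "m < length xs" unfolding m_def using xs by simp
  have rot: "rotate k xs = drop m xs @ take m xs" unfolding m_def by (rule rotate_drop_take)
  then have "xs ! m = y" using r \<open>m < length xs\<close> by (simp add: Cons_nth_drop_Suc[symmetric])
  have "m = length u"
  proof (rule ccontr)
    assume "m \<noteq> length u"
    then have "xs ! m \<in> set u \<or> xs ! m \<in> set v"
      using xs \<open>m < length xs\<close> by (auto simp: nth_append nth_Cons' split: if_splits)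
    then show False using \<open>xs ! m = y\<close> assms(2,3) by blast
  qed
  then show ?thesis using r rot xs by simp
qed

lemma occurrence_parity:
  assumes "hd xs = x"
    and gaps: "\<And>u m v. xs = u @ x # m @ x # v \<Longrightarrow> x \<notin> set m \<Longrightarrow> even (length m)"
    and "xs = u @ x # v"
  shows "even (length u + count_list u x)"
  using assms(3)
proof (induction "length u" arbitrary: u v rule: less_induct)
  case less
  show ?case
  proof (cases "x \<in> set u")
    case False
    then have "u = []" using \<open>hd xs = x\<close> less.prems by (cases u) auto
    then show ?thesis by simp
  next
    case True
    then obtain u1 m where u: "u = u1 @ x # m" "x \<notin> set m" by (meson split_list_last)
    have "even (length u1 + count_list u1 x)"
      using less.hyps[of u1 "m @ x # v"] u less.prems by simp
    moreover have "even (length m)" using gaps[of u1 m v] u less.prems by simp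
    ultimately show ?thesis using u by simp
  qed
qed

section \<open>Two-letter restrictions of words\<close>

definition even_counts :: "'a list \<Rightarrow> bool" where
  "even_counts L \<longleftrightarrow> (\<forall>x. even (count_list L x))"

definition even_switches :: "'a list \<Rightarrow> bool" where
  "even_switches L \<longleftrightarrow> (\<forall>U V a x y c.
     filter (\<lambda>z. z = U \<or> z = V) L = a @ x # y # c \<longrightarrow> x \<noteq> y \<longrightarrow> even (length a))"

definition first_before :: "'a list \<Rightarrow> 'a \<Rightarrow> 'a \<Rightarrow> bool" where
  "first_before L X Y \<longleftrightarrow> X \<noteq> Y \<and> X \<in> set L \<and> Y \<in> set L \<and> hd (filter (\<lambda>z. z = X \<or> z = Y) L) = X"

definition surrounds :: "'a list \<Rightarrow> 'a \<Rightarrow> 'a \<Rightarrow> bool" where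
  "surrounds L X Y \<longleftrightarrow> (\<forall>u v. L = u @ Y # v \<longrightarrow> X \<in> set u \<and> X \<in> set v)"

lemma even_counts_rev: "even_counts L \<Longrightarrow> even_counts (rev L)"
  unfolding even_counts_def by simp

lemma even_switches_rev:
  assumes "even_counts L" "even_switches L"
  shows "even_switches (rev L)"
  unfolding even_switches_def
proof (intro allI impI)
  fix U V x y :: 'a and a c :: "'a list"
  let ?Q = "\<lambda>z. z = U \<or> z = V"
  assume "filter ?Q (rev L) = a @ x # y # c" and "x \<noteq> y"
  then have L: "filter ?Q L = rev c @ y # x # rev a"
    by (metis rev_filter rev_rev_ident rev.simps(2) rev_append append.assoc append_Cons append_Nil)
  then have "x \<in> set (filter ?Q L)" "y \<in> set (filter ?Q L)" by auto
  then have "U \<noteq> V" using \<open>x \<noteq> y\<close> by auto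
  have "even (length c)"
    using assms(2) L \<open>x \<noteq> y\<close> unfolding even_switches_def by (metis length_rev)
  moreover have "even (length (filter ?Q L))"
    using assms(1) length_filter_two_letters[OF \<open>U \<noteq> V\<close>] unfolding even_counts_def by simp
  ultimately show "even (length a)" using L by simp
qed

lemma even_counts_filter: "(\<And>x. P x \<Longrightarrow> even (count_list w x)) \<Longrightarrow> even_counts (filter P w)"
  unfolding even_counts_def by (simp add: count_list_filter)

lemma even_switches_filter:
  assumes parity: "\<And>u x v. w = u @ x # v \<Longrightarrow> P x \<Longrightarrow> even (length u + count_list u x)"
    and gap: "\<And>u x m y v. w = u @ x # m @ y # v \<Longrightarrow> P x \<Longrightarrow> P y \<Longrightarrow> x \<noteq> y \<Longrightarrow>
      x \<notin> set m \<Longrightarrow> y \<notin> set m \<Longrightarrow> odd (length m)"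
  shows "even_switches (filter P w)"
  unfolding even_switches_def
proof (intro allI impI)
  fix U V x y :: 'a and a c :: "'a list"
  let ?R = "\<lambda>z. P z \<and> (z = U \<or> z = V)"
  assume "filter (\<lambda>z. z = U \<or> z = V) (filter P w) = a @ x # y # c" and "x \<noteq> y"
  then have "filter ?R w = a @ x # y # c" by (simp add: filter_filter)
  then obtain us vs where w: "w = us @ vs" "filter ?R us = a" "filter ?R vs = x # y # c"
    using filter_eq_appendD by blast
  obtain m1 vs1 where vs: "vs = m1 @ x # vs1" "\<forall>z\<in>set m1. \<not> ?R z" "?R x" "y # c = filter ?R vs1"
    using filter_eq_ConsD[OF w(3)] by blast
  obtain m2 vs2 where vs1: "vs1 = m2 @ y # vs2" "\<forall>z\<in>set m2. \<not> ?R z" "?R y"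
    using filter_eq_ConsD[OF vs(4)[symmetric]] by blast
  define u where "u = us @ m1"
  have xy: "P x" "P y" "x \<in> {U, V}" "y \<in> {U, V}" using vs(3) vs1(3) by auto
  have "x \<notin> set m1" "y \<notin> set m1" "x \<notin> set m2" "y \<notin> set m2" using vs(2) vs1(2) xy by auto
  have w': "w = u @ x # m2 @ y # vs2" using w vs vs1 unfolding u_def by simp
  have "even (length u + count_list u x)" using parity[OF w' \<open>P x\<close>] .
  moreover have "even (length (u @ x # m2) + count_list (u @ x # m2) y)"
    using parity[of "u @ x # m2" y vs2] w' \<open>P y\<close> by simp
  then have "even (length u + 1 + length m2 + count_list u y)"
    using \<open>x \<noteq> y\<close> \<open>y \<notin> set m2\<close> by simp
  moreover have "odd (length m2)"
    using gap[OF w' \<open>P x\<close> \<open>P y\<close> \<open>x \<noteq> y\<close> \<open>x \<notin> set m2\<close> \<open>y \<notin> set m2\<close>] .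
  moreover have "count_list u x = count_list us x" "count_list u y = count_list us y"
    using \<open>x \<notin> set m1\<close> \<open>y \<notin> set m1\<close> unfolding u_def by simp_all
  moreover have "length a = count_list us x + count_list us y"
  proof -
    have "filter ?R us = filter (\<lambda>z. z = x \<or> z = y) us"
      using xy \<open>x \<noteq> y\<close> by (intro filter_cong) auto
    then show ?thesis using w(2) length_filter_two_letters[OF \<open>x \<noteq> y\<close>] by simp
  qed
  ultimately show "even (length a)" by (simp add: even_add)
qed

lemma filter_two_letters_commute:
  "filter (\<lambda>z. z = Y \<or> z = X) L = filter (\<lambda>z. z = X \<or> z = Y) L"
  by (rule filter_cong) auto

lemma first_before_total:
  assumes "X \<noteq> Y" "X \<in> set L" "Y \<in> set L"
  shows "first_before L X Y \<or> first_before L Y X"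
proof -
  let ?Q = "\<lambda>z. z = X \<or> z = Y"
  have "filter ?Q L \<noteq> []" using assms(2) by (auto simp: filter_empty_conv)
  then have "hd (filter ?Q L) = X \<or> hd (filter ?Q L) = Y"
    using hd_in_set[of "filter ?Q L"] by auto
  then show ?thesis using assms unfolding first_before_def filter_two_letters_commute[of Y X] by auto
qed

lemma first_before_asym: "first_before L X Y \<Longrightarrow> \<not> first_before L Y X"
  unfolding first_before_def filter_two_letters_commute[of Y X] by auto

lemma first_before_Cons: "z \<in> set (x # t) \<Longrightarrow> z \<noteq> x \<Longrightarrow> first_before (x # t) x z"
  unfolding first_before_def by auto

text \<open>A word over \<open>{U, V}\<close> starting with \<open>U\<close> whose letter changes only after prefixes of
  even length reads \<open>U\<close> followed by pairs \<open>UU\<close> and \<open>VV\<close>.\<close>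
lemma odd_prefix_counts:
  assumes "set rs \<subseteq> {U, V}" "U \<noteq> V" "hd rs = U"
    and switch: "\<And>a x y c. rs = a @ x # y # c \<Longrightarrow> x \<noteq> y \<Longrightarrow> even (length a)"
    and "odd m" "m \<le> length rs"
  shows "odd (count_list (take m rs) U) \<and> even (count_list (take m rs) V)"
proof -
  have "odd (count_list (take (2 * j + 1) rs) U) \<and> even (count_list (take (2 * j + 1) rs) V)"
    if "2 * j + 1 \<le> length rs" for j
    using that
  proof (induction j)
    case 0
    then obtain t where "rs = U # t" using \<open>hd rs = U\<close> by (cases rs) auto
    then show ?case using \<open>U \<noteq> V\<close> by simp
  next
    case (Suc j)
    define k where "k = 2 * j + 1"
    have k: "Suc k < length rs" using Suc.prems unfolding k_def by simp
    have "drop k rs = rs ! k # rs ! Suc k # drop (Suc (Suc k)) rs"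
      using k by (simp add: Cons_nth_drop_Suc)
    then have split: "rs = take k rs @ rs ! k # rs ! Suc k # drop (Suc (Suc k)) rs"
      by (metis append_take_drop_id)
    have same: "rs ! Suc k = rs ! k"
    proof (rule ccontr)
      assume "rs ! Suc k \<noteq> rs ! k"
      then have "even (length (take k rs))" using switch[OF split] by simp
      then show False using k unfolding k_def by simp
    qed
    have "take (2 * Suc j + 1) rs = take k rs @ [rs ! k, rs ! k]"
      using k same unfolding k_def by (simp add: take_Suc_conv_app_nth)
    then have "count_list (take (2 * Suc j + 1) rs) z
        = count_list (take k rs) z + (if rs ! k = z then 2 else 0)" for z
      by simp
    then show ?case using Suc.IH Suc.prems unfolding k_def by simp
  qed
  moreover obtain j where "m = 2 * j + 1" using \<open>odd m\<close> by (rule oddE)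
  ultimately show ?thesis using \<open>m \<le> length rs\<close> by simp
qed

context
  fixes L :: "'a list"
  assumes counts: "even_counts L" and switches: "even_switches L"
begin

lemma restriction_odd_prefix_counts:
  assumes "first_before L U V" "odd m" "m \<le> length (filter (\<lambda>z. z = U \<or> z = V) L)"
  shows "odd (count_list (take m (filter (\<lambda>z. z = U \<or> z = V) L)) U)
    \<and> even (count_list (take m (filter (\<lambda>z. z = U \<or> z = V) L)) V)"
proof (rule odd_prefix_counts)
  show "U \<noteq> V" "hd (filter (\<lambda>z. z = U \<or> z = V) L) = U"
    using assms(1) unfolding first_before_def by blast+
  show "\<And>a x y c. filter (\<lambda>z. z = U \<or> z = V) L = a @ x # y # c \<Longrightarrow> x \<noteq> y \<Longrightarrow> even (length a)"
    using switches unfolding even_switches_def by blast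
qed (use assms in auto)

lemma last_restriction:
  assumes "first_before L U V"
  shows "last (filter (\<lambda>z. z = U \<or> z = V) L) = U"
proof (rule ccontr)
  let ?rs = "filter (\<lambda>z. z = U \<or> z = V) L"
  assume last: "last ?rs \<noteq> U"
  have "U \<noteq> V" "U \<in> set L" using assms unfolding first_before_def by blast+
  then obtain ys y where rs: "?rs = ys @ [y]" by (cases ?rs rule: rev_cases) (auto simp: filter_empty_conv)
  have "even (length ?rs)"
    using counts length_filter_two_letters[OF \<open>U \<noteq> V\<close>] unfolding even_counts_def by simp
  then have "odd (length ys)" using rs by simp
  then have "odd (count_list ys U)"
    using restriction_odd_prefix_counts[OF assms, of "length ys"] rs by simp
  moreover have "y \<noteq> U" using last rs by simp
  ultimately have "odd (count_list ?rs U)" using rs by simp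
  then show False using counts unfolding even_counts_def by (simp add: count_list_filter)
qed

lemma first_before_surrounds:
  assumes "first_before L X Y"
  shows "surrounds L X Y"
  unfolding surrounds_def
proof (intro allI impI)
  fix u v assume L: "L = u @ Y # v"
  let ?Q = "\<lambda>z. z = X \<or> z = Y"
  have "X \<noteq> Y" and hd: "hd (filter ?Q L) = X" using assms unfolding first_before_def by auto
  have split: "filter ?Q L = filter ?Q u @ Y # filter ?Q v" using L by simp
  have only_Y: "\<forall>z\<in>set (filter ?Q xs). z = Y" if "X \<notin> set xs" for xs
    using that by auto
  have hd_Y: "hd (xs @ Y # ys) = Y" if "\<forall>z\<in>set xs. z = Y" for xs ys
    using that by (cases xs) auto
  have last_Y: "last (xs @ Y # ys) = Y" if "\<forall>z\<in>set ys. z = Y" for xs ys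
    using that by (cases ys rule: rev_cases) auto
  show "X \<in> set u \<and> X \<in> set v"
  proof
    show "X \<in> set u"
    proof (rule ccontr)
      assume "X \<notin> set u"
      then have "hd (filter ?Q L) = Y" using split only_Y hd_Y by metis
      then show False using hd \<open>X \<noteq> Y\<close> by simp
    qed
    show "X \<in> set v"
    proof (rule ccontr)
      assume "X \<notin> set v"
      then have "last (filter ?Q L) = Y" using split only_Y last_Y by metis
      then show False using last_restriction[OF assms] \<open>X \<noteq> Y\<close> by simp
    qed
  qed
qed

lemma first_before_snoc:
  assumes "L = p @ [x]" "z \<in> set L" "z \<noteq> x"
  shows "first_before L x z"
proof -
  have "\<not> first_before L z x"
    using first_before_surrounds assms(1) unfolding surrounds_def by fastforce
  then show ?thesis using first_before_total[OF assms(3), of L] assms by auto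
qed

lemma count_at_switch:
  assumes "first_before L U V" and L: "L = u @ x # m @ y # v" and "x \<noteq> y"
    and "x \<in> {U, V}" "y \<in> {U, V}" "x \<notin> set m"
  shows "odd (count_list (u @ [x]) U) \<and> even (count_list (u @ [x]) V)"
proof -
  let ?Q = "\<lambda>z. z = U \<or> z = V"
  have "\<forall>z\<in>set (filter ?Q m). z = y" using assms(3-6) by auto
  then obtain k where "filter ?Q m = replicate k y" by (metis replicate_length_same)
  then have rs: "filter ?Q L = filter ?Q u @ x # y # (replicate k y @ filter ?Q v)"
    using L assms(4,5) by (simp add: replicate_app_Cons_same)
  define a where "a = filter ?Q u"
  have "even (length a)"
    using switches rs \<open>x \<noteq> y\<close> unfolding even_switches_def a_def by blast
  moreover have "take (Suc (length a)) (filter ?Q L) = a @ [x]" and "Suc (length a) \<le> length (filter ?Q L)"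
    using rs unfolding a_def by simp_all
  ultimately have "odd (count_list (a @ [x]) U) \<and> even (count_list (a @ [x]) V)"
    using restriction_odd_prefix_counts[OF assms(1), of "Suc (length a)"] by simp
  moreover have "count_list a U = count_list u U" "count_list a V = count_list u V"
    unfolding a_def by (simp_all add: count_list_filter)
  ultimately show ?thesis by simp
qed

lemma first_between_not_adjacent:
  assumes XZ: "first_before L X Z" and ZY: "first_before L Z Y"
    and adjacent: "L = p @ X # Y # s \<or> L = p @ Y # X # s"
  shows False
proof -
  have "X \<noteq> Z" "Z \<noteq> Y" using XZ ZY unfolding first_before_def by auto
  have surr: "Z \<in> set u" if "L = u @ Y # v" for u v
    using first_before_surrounds[OF ZY] that unfolding surrounds_def by blast
  have "Z \<in> set p"
    using adjacent
  proof
    assume "L = p @ X # Y # s"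
    then have "Z \<in> set (p @ [X])" using surr[of "p @ [X]" s] by simp
    then show ?thesis using \<open>X \<noteq> Z\<close> by auto
  qed (use surr in blast)
  then obtain p1 p2 where p: "p = p1 @ Z # p2" "Z \<notin> set p2" by (meson split_list_last)
  obtain m1 v1 m2 v2 where
    "L = p1 @ Z # m1 @ X # v1" "Z \<notin> set m1" "L = p1 @ Z # m2 @ Y # v2" "Z \<notin> set m2"
    using adjacent
  proof
    assume "L = p @ X # Y # s"
    then show ?thesis using that[of p2 "Y # s" "p2 @ [X]" s] p \<open>X \<noteq> Z\<close> by simp
  next
    assume "L = p @ Y # X # s"
    then show ?thesis using that[of "p2 @ [Y]" s p2 "X # s"] p \<open>Z \<noteq> Y\<close> by simp
  qed
  then have "even (count_list (p1 @ [Z]) Z)" "odd (count_list (p1 @ [Z]) Z)"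
    using count_at_switch[OF XZ] count_at_switch[OF ZY] \<open>X \<noteq> Z\<close> \<open>Z \<noteq> Y\<close> by blast+
  then show False by simp
qed

end

section \<open>The induced order of a reduced representative\<close>

lemma surrounds_filter:
  assumes "surrounds (filter P v) X Y" "P Y"
  shows "surrounds v X Y"
  unfolding surrounds_def
proof (intro allI impI)
  fix u w assume "v = u @ Y # w"
  then have "filter P v = filter P u @ Y # filter P w" using assms(2) by simp
  then show "X \<in> set u \<and> X \<in> set w" using assms(1) unfolding surrounds_def by fastforce
qed

lemma cdist_less_if_surrounds:
  assumes surr: "surrounds v X Y" and "Y \<in> set v"
  shows "cdist v X < cdist v Y"
proof -
  let ?n = "length v"
  define D where "D x = {min p (?n - p) | p. p < ?n \<and> v ! p = x}" for x
  have fin: "finite (D x)" for x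
    by (rule finite_subset[of _ "(\<lambda>p. min p (?n - p)) ` {..<?n}"]) (auto simp: D_def)
  have "D Y \<noteq> {}" using \<open>Y \<in> set v\<close> unfolding D_def by (auto simp: in_set_conv_nth)
  then have "cdist v Y \<in> D Y" unfolding cdist_def D_def[symmetric] by (rule Min_in[OF fin])
  then obtain p where p: "p < ?n" "v ! p = Y" "cdist v Y = min p (?n - p)" unfolding D_def by blast
  have "v = take p v @ Y # drop (Suc p) v" using p by (metis id_take_nth_drop)
  then have "X \<in> set (take p v)" "X \<in> set (drop (Suc p) v)"
    using surr unfolding surrounds_def by blast+
  then obtain i j where i: "i < p" "v ! i = X" and j: "j < ?n - Suc p" "v ! (Suc p + j) = X"
    by (auto simp: in_set_conv_nth)
  have "i < ?n" "Suc p + j < ?n" using i j p by simp_all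
  have "min i (?n - i) \<in> D X" unfolding D_def using i \<open>i < ?n\<close> by blast
  then have "cdist v X \<le> i" unfolding cdist_def D_def[symmetric]
    by (meson Min_le fin min.cobounded1 order_trans)
  moreover have "min (Suc p + j) (?n - (Suc p + j)) \<in> D X"
    unfolding D_def using j \<open>Suc p + j < ?n\<close> by blast
  then have "cdist v X \<le> ?n - (Suc p + j)" unfolding cdist_def D_def[symmetric]
    by (meson Min_le fin min.cobounded2 order_trans)
  ultimately show ?thesis using i j p(3) by simp
qed

lemma filter_proper_ins_eps: "filter proper (ins_eps xs) = filter proper xs"
  by (induction xs rule: ins_eps.induct) (auto simp: proper_def)

lemma filter_proper_vword: "filter proper (vword r) = filter proper (tl r)"
  unfolding vword_def by (simp add: filter_proper_ins_eps proper_def)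

lemma prec_asym: "prec r x z \<Longrightarrow> prec r z x \<Longrightarrow> False"
  unfolding prec_def proper_def by auto

lemma prec_proper: "prec r x y \<Longrightarrow> proper y"
  unfolding prec_def by auto

lemma cover_pair_refl: "cover_pair r x x"
  unfolding cover_pair_def cover_ord_def using prec_asym by blast

context
  fixes t :: "'v letter list"
  assumes counts: "even_counts (filter proper t)"
    and switches: "even_switches (filter proper t)"
begin

text \<open>The letter occurring first surrounds the other one and hence lies closer to \<open>\<sigma>\<close>.\<close>
lemma prec_iff_first_before:
  assumes X: "X \<in> set (filter proper t)" and Y: "Y \<in> set (filter proper t)"
  shows "prec (Sig # t) X Y \<longleftrightarrow> first_before (filter proper t) X Y"
proof -
  let ?L = "filter proper t" and ?v = "vword (Sig # t)"
  have vL: "filter proper ?v = ?L" by (simp add: filter_proper_vword)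
  have less: "cdist ?v A < cdist ?v B" if AB: "first_before ?L A B" for A B
  proof (rule cdist_less_if_surrounds)
    have "surrounds ?L A B" using first_before_surrounds[OF counts switches AB] .
    moreover have "proper B" "B \<in> set ?L" using AB unfolding first_before_def by auto
    ultimately show "surrounds ?v A B" using surrounds_filter[of proper ?v A B] vL by simp
    have "B \<in> set (filter proper ?v)" using vL \<open>B \<in> set ?L\<close> by simp
    then show "B \<in> set ?v" by simp
  qed
  have "proper X" "proper Y" using X Y by auto
  show ?thesis
  proof
    assume "prec (Sig # t) X Y"
    then have "X \<noteq> Y" "cdist ?v X < cdist ?v Y"
      using \<open>proper X\<close> unfolding prec_def proper_def by auto
    then show "first_before ?L X Y" using first_before_total[OF \<open>X \<noteq> Y\<close> X Y] less[of Y X] by auto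
  next
    assume "first_before ?L X Y"
    then have "X \<noteq> Y" "cdist ?v X < cdist ?v Y" using less unfolding first_before_def by auto
    then show "prec (Sig # t) X Y" using \<open>proper X\<close> \<open>proper Y\<close> unfolding prec_def by simp
  qed
qed

lemma letter_of_prec:
  assumes "z \<in> set (Sig # t)" "prec (Sig # t) x z"
  shows "z \<in> set (filter proper t)"
  using assms prec_proper[OF assms(2)] by (auto simp: proper_def)

lemma cover_ord_Sig:
  assumes Y: "Y \<in> set (filter proper t)"
    and first: "\<forall>z\<in>set (filter proper t). z \<noteq> Y \<longrightarrow> first_before (filter proper t) Y z"
  shows "cover_ord (Sig # t) Sig Y"
  unfolding cover_ord_def
proof
  show "Sig = Y \<or> prec (Sig # t) Sig Y" using Y unfolding prec_def by simp
  show "\<not> (\<exists>z\<in>set (Sig # t) - {Eps}. z \<noteq> Sig \<and> z \<noteq> Y \<and> prec (Sig # t) Sig z \<and> prec (Sig # t) z Y)"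
  proof
    assume "\<exists>z\<in>set (Sig # t) - {Eps}. z \<noteq> Sig \<and> z \<noteq> Y \<and> prec (Sig # t) Sig z \<and> prec (Sig # t) z Y"
    then obtain z where z: "z \<in> set (Sig # t)" "z \<noteq> Y" "prec (Sig # t) Sig z" "prec (Sig # t) z Y"
      by blast
    then have "z \<in> set (filter proper t)" by (intro letter_of_prec)
    then have "first_before (filter proper t) z Y" "first_before (filter proper t) Y z"
      using prec_iff_first_before[OF _ Y] z first by auto
    then show False by (metis first_before_asym)
  qed
qed

lemma cover_ord_adjacent:
  assumes XY: "first_before (filter proper t) X Y"
    and adjacent: "filter proper t = p @ X # Y # s \<or> filter proper t = p @ Y # X # s"
  shows "cover_ord (Sig # t) X Y"
  unfolding cover_ord_def
proof
  let ?L = "filter proper t"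
  have in_L: "X \<in> set ?L" "Y \<in> set ?L" using XY unfolding first_before_def by auto
  show "X = Y \<or> prec (Sig # t) X Y" using prec_iff_first_before[OF in_L] XY by simp
  show "\<not> (\<exists>z\<in>set (Sig # t) - {Eps}. z \<noteq> X \<and> z \<noteq> Y \<and> prec (Sig # t) X z \<and> prec (Sig # t) z Y)"
  proof
    assume "\<exists>z\<in>set (Sig # t) - {Eps}. z \<noteq> X \<and> z \<noteq> Y \<and> prec (Sig # t) X z \<and> prec (Sig # t) z Y"
    then obtain z where z: "z \<in> set (Sig # t)" "prec (Sig # t) X z" "prec (Sig # t) z Y"
      by blast
    then have "z \<in> set ?L" by (intro letter_of_prec)
    then have "first_before ?L X z" "first_before ?L z Y"
      using z prec_iff_first_before in_L by simp_all
    then show False using first_between_not_adjacent[OF counts switches _ _ adjacent] by blast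
  qed
qed

lemma cover_pair_adjacent:
  assumes L: "filter proper t = p @ X # Y # s"
  shows "cover_pair (Sig # t) X Y"
proof (cases "X = Y")
  case True
  then show ?thesis using cover_pair_refl by metis
next
  case False
  have "X \<in> set (filter proper t)" "Y \<in> set (filter proper t)" using L by simp_all
  then consider "first_before (filter proper t) X Y" | "first_before (filter proper t) Y X"
    using first_before_total[OF False] by blast
  then show ?thesis
  proof cases
    case 1
    then show ?thesis using cover_ord_adjacent L unfolding cover_pair_def by blast
  next
    case 2
    then show ?thesis using cover_ord_adjacent L unfolding cover_pair_def by blast
  qed
qed

end

lemma filter_proper_blocks:
  "\<forall>(x, l)\<in>set bs. proper x \<Longrightarrow> filter proper (blocks bs) = concat (map (\<lambda>(x, l). replicate l x) bs)"
  by (induction bs rule: blocks.induct) (auto simp: proper_def filter_replicate)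

lemma concat_replicates_adjacent:
  assumes "\<forall>(x, l)\<in>set bs. 0 < l" "Suc h < length bs"
  shows "\<exists>p s. concat (map (\<lambda>(x, l). replicate l x) bs) = p @ fst (bs ! h) # fst (bs ! Suc h) # s"
proof -
  obtain x l y k where xl: "bs ! h = (x, l)" and yk: "bs ! Suc h = (y, k)" by fastforce
  have "(x, l) \<in> set bs" "(y, k) \<in> set bs" using assms(2) xl yk by (metis Suc_lessD nth_mem)+
  then have "0 < l" "0 < k" using assms(1) by auto
  have rep: "replicate l x = replicate (l - 1) x @ [x]" "replicate k y = y # replicate (k - 1) y"
    using \<open>0 < l\<close> \<open>0 < k\<close> by (cases l, simp_all add: replicate_append_same, cases k, simp_all)
  have "drop h bs = bs ! h # bs ! Suc h # drop (Suc (Suc h)) bs"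
    using assms(2) by (simp add: Cons_nth_drop_Suc)
  then obtain pre post where "bs = pre @ (x, l) # (y, k) # post"
    unfolding xl yk by (metis append_take_drop_id)
  then have "concat (map (\<lambda>(x, l). replicate l x) bs)
      = (concat (map (\<lambda>(x, l). replicate l x) pre) @ replicate (l - 1) x) @ x # y #
        (replicate (k - 1) y @ concat (map (\<lambda>(x, l). replicate l x) post))"
    using rep by simp
  then show ?thesis unfolding xl yk fst_conv by blast
qed

lemma concat_replicates_hd:
  assumes "\<forall>(x, l)\<in>set bs. 0 < l" "bs \<noteq> []"
  shows "\<exists>t. concat (map (\<lambda>(x, l). replicate l x) bs) = fst (hd bs) # t"
proof -
  obtain x l bs' where "bs = (x, l) # bs'" using assms(2) by (metis list.exhaust surj_pair)
  moreover have "0 < l" using assms(1) calculation by auto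
  ultimately show ?thesis by (cases l) auto
qed

lemma concat_replicates_last:
  assumes "\<forall>(x, l)\<in>set bs. 0 < l" "bs \<noteq> []"
  shows "\<exists>p. concat (map (\<lambda>(x, l). replicate l x) bs) = p @ [fst (last bs)]"
proof -
  obtain x l bs' where "bs = bs' @ [(x, l)]" using assms(2) by (metis rev_exhaust surj_pair)
  moreover have "0 < l" using assms(1) calculation by auto
  ultimately show ?thesis by (cases l) (auto simp flip: replicate_append_same)
qed

lemma cover_pairs_of_blocks:
  assumes blocks: "\<forall>(x, l)\<in>set bs. proper x \<and> 0 < l"
    and counts: "even_counts (filter proper (blocks bs))"
    and switches: "even_switches (filter proper (blocks bs))"
    and "h \<le> length bs"
  shows "cover_pair (Sig # blocks bs) ((Sig # map fst bs) ! h)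
    ((Sig # map fst bs) ! ((h + 1) mod (length bs + 1)))"
proof -
  let ?L = "filter proper (blocks bs)"
  have L: "?L = concat (map (\<lambda>(x, l). replicate l x) bs)"
    using blocks by (intro filter_proper_blocks) auto
  have pos: "\<forall>(x, l)\<in>set bs. 0 < l" using blocks by auto
  consider "bs = []" | "bs \<noteq> []" "h = 0" | "bs \<noteq> []" "h = length bs" | "0 < h" "h < length bs"
    using \<open>h \<le> length bs\<close> by fastforce
  then show ?thesis
  proof cases
    case 1
    then show ?thesis using \<open>h \<le> length bs\<close> by (simp add: cover_pair_refl)
  next
    case 2
    obtain t where t: "?L = fst (hd bs) # t" using concat_replicates_hd[OF pos 2(1)] L by auto
    have "cover_ord (Sig # blocks bs) Sig (fst (hd bs))"
      using cover_ord_Sig[OF counts switches] first_before_Cons t by (metis list.set_intros(1))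
    then show ?thesis using 2 unfolding cover_pair_def by (simp add: hd_conv_nth)
  next
    case 3
    obtain p where p: "?L = p @ [fst (last bs)]" using concat_replicates_last[OF pos 3(1)] L by auto
    have "cover_ord (Sig # blocks bs) Sig (fst (last bs))"
      using cover_ord_Sig[OF counts switches] first_before_snoc[OF counts switches p] p
      by (metis in_set_conv_decomp)
    then show ?thesis using 3 unfolding cover_pair_def by (simp add: last_conv_nth)
  next
    case 4
    obtain p s where "?L = p @ fst (bs ! (h - 1)) # fst (bs ! Suc (h - 1)) # s"
      using concat_replicates_adjacent[OF pos, of "h - 1"] 4 L by auto
    then have "cover_pair (Sig # blocks bs) (fst (bs ! (h - 1))) (fst (bs ! h))"
      using cover_pair_adjacent[OF counts switches] 4 by simp
    then show ?thesis using 4 by (cases h) auto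
  qed
qed

section \<open>Sub-multisuns\<close>

lemma maxclique_extend:
  assumes "sgraph V E" "clique V E K"
  obtains M where "maxclique V E M" "K \<subseteq> M"
proof -
  let ?C = "{K'. clique V E K' \<and> K \<subseteq> K'}"
  have "?C \<subseteq> Pow V" unfolding clique_def by blast
  moreover have "finite (Pow V)" using assms(1) unfolding sgraph_def by simp
  ultimately have "finite ?C" by (rule finite_subset)
  moreover have "K \<in> ?C" using assms(2) by simp
  ultimately obtain M where M: "M \<in> ?C" "\<forall>K'\<in>?C. M \<subseteq> K' \<longrightarrow> M = K'"
    using finite_has_maximal[of ?C] by blast
  then have "maxclique V E M" unfolding maxclique_def by blast
  then show ?thesis using that M(1) by blast
qed

lemma rim_vertex_in_edge:
  assumes "is_rim V E cyc" "v \<in> V"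
  obtains e where "maxclique V E e" "card e = 2" "v \<in> e"
proof -
  obtain i where i: "i < length cyc" "cyc ! i = v"
    using assms unfolding is_rim_def by (auto simp: in_set_conv_nth)
  have "{v, cyc ! ((i + 1) mod length cyc)} \<in> cyc_edges cyc" unfolding cyc_edges_def using i by blast
  then show ?thesis using assms(1) that unfolding is_rim_def by blast
qed

lemma clique_of_subE: "clique V (subE E D) K \<Longrightarrow> clique V E K"
  unfolding clique_def subE_def by blast

lemma clique_subE_if_maxclique:
  assumes D: "D \<subseteq> inscr V E"
    and no_shared_edge: "\<forall>A\<in>inscr V E. \<forall>B\<in>inscr V E. A \<noteq> B \<longrightarrow> (\<forall>x\<in>A \<inter> B. \<forall>y\<in>A \<inter> B. x = y)"
    and M: "maxclique V E M" "M \<notin> D"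
  shows "clique V (subE E D) M"
proof -
  have "\<not> (x \<in> X \<and> y \<in> X)" if xy: "x \<in> M" "y \<in> M" "x \<noteq> y" and "X \<in> D" for x y X
  proof
    assume "x \<in> X \<and> y \<in> X"
    have X: "X \<in> inscr V E" using \<open>X \<in> D\<close> D by blast
    show False
    proof (cases "M \<in> inscr V E")
      case True
      moreover have "M \<noteq> X" using \<open>X \<in> D\<close> M(2) by blast
      ultimately show False using no_shared_edge X xy \<open>x \<in> X \<and> y \<in> X\<close> by blast
    next
      case False
      then have "card M = 2" using M(1) unfolding inscr_def by simp
      then have "M \<subseteq> X" using xy \<open>x \<in> X \<and> y \<in> X\<close> by (auto simp: card_2_iff)
      then have "X = M" using M(1) X unfolding maxclique_def inscr_def by blast
      then show False using \<open>X \<in> D\<close> M(2) by simp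
    qed
  qed
  then show ?thesis using M(1) unfolding maxclique_def clique_def subE_def by blast
qed

lemma maxclique_subE_iff:
  assumes sg: "sgraph V E" and rim: "is_rim V E cyc" and D: "D \<subseteq> inscr V E"
    and no_shared_edge: "\<forall>A\<in>inscr V E. \<forall>B\<in>inscr V E. A \<noteq> B \<longrightarrow> (\<forall>x\<in>A \<inter> B. \<forall>y\<in>A \<inter> B. x = y)"
  shows "maxclique V (subE E D) K \<longleftrightarrow> maxclique V E K \<and> K \<notin> D"
proof
  note kept = clique_subE_if_maxclique[OF D no_shared_edge]
  assume K: "maxclique V (subE E D) K"
  then have "clique V E K" unfolding maxclique_def by (blast intro: clique_of_subE)
  then obtain M where M: "maxclique V E M" "K \<subseteq> M" by (rule maxclique_extend[OF sg])
  txt \<open>If \<open>M\<close> were deleted, \<open>K\<close> would have at most one vertex; but every vertex lies on a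
    rim edge, which survives.\<close>
  have "M \<notin> D"
  proof
    assume "M \<in> D"
    then have single: "x = y" if "x \<in> K" "y \<in> K" for x y
      using K M(2) that unfolding maxclique_def clique_def subE_def by blast
    obtain v where "v \<in> V" "K \<subseteq> {v}"
    proof (cases "K = {}")
      case True
      then show ?thesis using rim that unfolding is_rim_def by (metis empty_subsetI last_in_set
            list.size(3) not_numeral_le_zero)
    next
      case False
      then show ?thesis using single that K unfolding maxclique_def clique_def by blast
    qed
    obtain e where e: "maxclique V E e" "card e = 2" "v \<in> e"
      using rim_vertex_in_edge[OF rim \<open>v \<in> V\<close>] by blast
    have "e \<notin> D" using D e(2) unfolding inscr_def by auto
    then have "e = K" using kept[OF e(1)] K \<open>K \<subseteq> {v}\<close> e(3) unfolding maxclique_def by blast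
    moreover have "card K \<le> 1" using card_mono[OF _ \<open>K \<subseteq> {v}\<close>] by simp
    ultimately show False using e(2) by simp
  qed
  then have "M = K" using kept[OF M(1)] K M(2) unfolding maxclique_def by blast
  then show "maxclique V E K \<and> K \<notin> D" using M \<open>M \<notin> D\<close> by simp
next
  assume "maxclique V E K \<and> K \<notin> D"
  then have "clique V (subE E D) K" by (blast intro: clique_subE_if_maxclique[OF D no_shared_edge])
  then show "maxclique V (subE E D) K"
    using \<open>maxclique V E K \<and> K \<notin> D\<close> clique_of_subE unfolding maxclique_def by blast
qed

lemma N_conds_centre:
  assumes "N_conds V S cyc"
  obtains \<xi> where "\<forall>A\<in>S. \<xi> \<in> A" "\<forall>A\<in>S. \<forall>B\<in>S. A \<noteq> B \<longrightarrow> A \<inter> B = {\<xi>}"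
proof -
  have "\<exists>\<xi>\<in>V. (\<forall>A\<in>S. \<xi> \<in> A) \<and> (\<forall>A\<in>S. \<forall>B\<in>S. A \<noteq> B \<longrightarrow> A \<inter> B = {\<xi>}) \<and>
      (\<forall>A\<in>S. \<forall>i k. end_path S cyc A {\<xi>} i k \<longrightarrow> even k)"
    using assms unfolding N_conds_def by (elim conjE)
  then show ?thesis by (elim bexE conjE) (rule that)
qed

lemma N_conds_A_path:
  assumes "N_conds V S cyc" "A \<in> S" "end_path S cyc A A i k"
  shows "even k"
proof -
  have "\<forall>A\<in>S. \<forall>i k. end_path S cyc A A i k \<longrightarrow> even k \<and> 4 \<le> k"
    using assms(1) unfolding N_conds_def by (elim conjE)
  then show ?thesis using assms(2,3) by blast
qed

lemma N_conds_AB_path: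
  assumes "N_conds V S cyc" "A \<in> S" "B \<in> S" "A \<noteq> B" "end_path S cyc (A - B) (B - A) i k"
  shows "odd k"
proof -
  have "\<forall>A\<in>S. \<forall>B\<in>S. A \<noteq> B \<longrightarrow> (\<forall>i k. end_path S cyc (A - B) (B - A) i k \<longrightarrow> odd k)"
    using assms(1) unfolding N_conds_def by (elim conjE)
  then show ?thesis using assms(2-5) by blast
qed

lemma sunoid_N_conds:
  assumes sun: "sunoid V E" and rim: "is_rim V E cyc" and S: "S \<subseteq> inscr V E" "S \<noteq> {}"
  shows "N_conds V S cyc"
proof -
  have sg: "sgraph V E" using sun unfolding sunoid_def multisun_def by simp
  have sub: "satisfies_N V (subE E D)" if "D \<subset> inscr V E" for D
    using sun that unfolding sunoid_def by simp
  have "subE E {} = E" unfolding subE_def by (intro ext) simp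
  moreover have "satisfies_N V (subE E {})" using S by (intro sub) blast
  ultimately have "N_conds V (inscr V E) cyc" using rim unfolding satisfies_N_def by simp
  then obtain \<xi> where \<xi>: "\<forall>A\<in>inscr V E. \<forall>B\<in>inscr V E. A \<noteq> B \<longrightarrow> A \<inter> B = {\<xi>}"
    by (rule N_conds_centre)
  define D where "D = inscr V E - S"
  have "D \<subset> inscr V E" using S unfolding D_def by blast
  then have "D \<subseteq> inscr V E" by blast
  have "satisfies_N V (subE E D)" using sub \<open>D \<subset> inscr V E\<close> .
  moreover have "\<forall>A\<in>inscr V E. \<forall>B\<in>inscr V E. A \<noteq> B \<longrightarrow> (\<forall>x\<in>A \<inter> B. \<forall>y\<in>A \<inter> B. x = y)"
  proof (intro ballI impI)
    fix A B x y assume AB: "A \<in> inscr V E" "B \<in> inscr V E" "A \<noteq> B" and "x \<in> A \<inter> B" "y \<in> A \<inter> B"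
    have "A \<inter> B = {\<xi>}" using \<xi> AB by blast
    then show "x = y" using \<open>x \<in> A \<inter> B\<close> \<open>y \<in> A \<inter> B\<close> by simp
  qed
  then have mx: "maxclique V (subE E D) K \<longleftrightarrow> maxclique V E K \<and> K \<notin> D" for K
    by (rule maxclique_subE_iff[OF sg rim \<open>D \<subseteq> inscr V E\<close>])
  then have "{K. maxclique V (subE E D) K \<and> card K = 2} = {K. maxclique V E K \<and> card K = 2}"
    using \<open>D \<subseteq> inscr V E\<close> unfolding inscr_def by blast
  then have "is_rim V (subE E D) cyc" using rim unfolding is_rim_def by simp
  moreover have "inscr V (subE E D) = S"
    using mx S unfolding inscr_def D_def by blast
  ultimately show ?thesis unfolding satisfies_N_def by simp
qed

lemma end_path_closed_split:
  assumes split: "cyc @ [hd cyc] = p @ a # q @ b # s" and len: "length q + 2 \<le> length cyc"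
    and "a \<in> P" "b \<in> Q" "\<forall>z\<in>set q. z \<notin> \<Union>I"
  shows "end_path I cyc P Q (length p) (length q + 2)"
proof -
  let ?n = "length cyc"
  have "cyc \<noteq> []" using len by auto
  have closed: "(cyc @ [hd cyc]) ! t = pv cyc 0 t" if "t \<le> ?n" for t
    using that \<open>cyc \<noteq> []\<close> by (cases "t = ?n") (auto simp: pv_def nth_append hd_conv_nth)
  have lens: "length p + length q + 1 \<le> ?n" using arg_cong[OF split, of length] by simp
  have pv: "pv cyc (length p) j = (cyc @ [hd cyc]) ! (length p + j)" if "length p + j \<le> ?n" for j
    using closed[OF that] unfolding pv_def by simp
  show ?thesis
    unfolding end_path_def
  proof (intro conjI allI impI)
    show "length p < ?n" "2 \<le> length q + 2" "length q + 2 \<le> ?n" using lens len by simp_all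
    show "pv cyc (length p) 0 \<in> P \<and> pv cyc (length p) (length q + 2 - 1) \<in> Q
      \<or> pv cyc (length p) 0 \<in> Q \<and> pv cyc (length p) (length q + 2 - 1) \<in> P"
      using pv[of 0] pv[of "length q + 1"] lens split assms(3,4) by (simp add: nth_append)
    fix j assume "0 < j \<and> j < length q + 2 - 1"
    then have "pv cyc (length p) j = q ! (j - 1)" "j - 1 < length q"
      using pv[of j] lens split by (auto simp: nth_append)
    then show "pv cyc (length p) j \<notin> \<Union>I" using assms(5) nth_mem by metis
  qed
qed

lemma lab_in_unique_clique:
  assumes "A \<in> I" "v \<in> A" "\<forall>B\<in>I. v \<in> B \<longrightarrow> B = A"
  shows "lab I v = Lt A"
proof -
  have "{X \<in> I. v \<in> X} = {A}" using assms by blast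
  moreover have "(THE X. X \<in> I \<and> v \<in> X) = A"
    by (rule the_equality) (use assms in blast)+
  ultimately show ?thesis unfolding lab_def using assms(1,2) by auto
qed

lemma lab_outside_cliques:
  assumes "\<forall>A\<in>I. v \<notin> A"
  shows "lab I v = Eps"
proof -
  have none: "{X \<in> I. v \<in> X} = {}" using assms by blast
  show ?thesis unfolding lab_def none using assms by simp
qed

section \<open>Reading the rim of a sunoid from the common vertex\<close>

locale sunoid_reading =
  fixes V :: "'v set" and E :: "'v \<Rightarrow> 'v \<Rightarrow> bool" and cyc :: "'v list"
  assumes sunoid: "sunoid V E" and rim: "is_rim V E cyc"
    and hd_Sig: "lab (inscr V E) (hd cyc) = Sig"
begin

abbreviation tail_word :: "'v letter list" where
  "tail_word \<equiv> map (lab (inscr V E)) (tl cyc)"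

lemma distinct_cyc: "distinct cyc" and cyc_Cons: "cyc = hd cyc # tl cyc"
  and odd_length: "odd (length cyc)"
proof -
  show "distinct cyc" using rim unfolding is_rim_def by simp
  show "cyc = hd cyc # tl cyc" using rim unfolding is_rim_def by (cases cyc) auto
  have "card V = length cyc" using rim distinct_card unfolding is_rim_def by metis
  then show "odd (length cyc)" using sunoid unfolding sunoid_def multisun_def by simp
qed

lemma hd_notin_tl: "hd cyc \<notin> set (tl cyc)"
  using distinct_cyc cyc_Cons by (metis distinct.simps(2))

lemma set_closed_rim: "set (cyc @ [hd cyc]) = insert (hd cyc) (set (tl cyc))"
  using cyc_Cons by (metis list.simps(15) set_append Un_insert_right append_Nil2 insert_absorb2)

lemma closed_rim: "cyc @ [hd cyc] = hd cyc # tl cyc @ [hd cyc]"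
  using cyc_Cons by (metis append_Cons)

lemma inscr_centre:
  assumes "A \<in> inscr V E"
  shows "hd cyc \<in> A" and "B \<in> inscr V E \<Longrightarrow> A \<noteq> B \<Longrightarrow> A \<inter> B = {hd cyc}"
proof -
  let ?S = "{X \<in> inscr V E. hd cyc \<in> X}"
  have two: "2 \<le> card ?S" using hd_Sig unfolding lab_def by (auto split: if_split_asm)
  then have "finite ?S" "\<not> card ?S \<le> Suc 0" by (auto intro: card_ge_0_finite)
  then obtain A0 B0 where "A0 \<in> ?S" "B0 \<in> ?S" "A0 \<noteq> B0" using card_le_Suc0_iff_eq by blast
  then have AB0: "A0 \<in> inscr V E" "B0 \<in> inscr V E" "A0 \<noteq> B0" "hd cyc \<in> A0" "hd cyc \<in> B0"
    by simp_all
  then have "N_conds V (inscr V E) cyc" using sunoid_N_conds[OF sunoid rim] by blast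
  then obtain \<xi> where \<xi>: "\<forall>A\<in>inscr V E. \<xi> \<in> A" "\<forall>A\<in>inscr V E. \<forall>B\<in>inscr V E. A \<noteq> B \<longrightarrow> A \<inter> B = {\<xi>}"
    by (rule N_conds_centre)
  have "A0 \<inter> B0 = {\<xi>}" using \<xi>(2) AB0(1-3) by blast
  then have "hd cyc \<in> {\<xi>}" using AB0(4,5) by (metis IntI)
  then have "\<xi> = hd cyc" by simp
  show "hd cyc \<in> A" using \<xi>(1) assms \<open>\<xi> = hd cyc\<close> by blast
  show "A \<inter> B = {hd cyc}" if "B \<in> inscr V E" "A \<noteq> B"
  proof -
    have "A \<inter> B = {\<xi>}" using \<xi>(2) assms that by blast
    then show ?thesis using \<open>\<xi> = hd cyc\<close> by simp
  qed
qed

lemma lab_off_centre: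
  assumes "v \<in> set (tl cyc)"
  shows "lab (inscr V E) v = Eps \<or> (\<exists>A\<in>inscr V E. lab (inscr V E) v = Lt A)"
    and "A \<in> inscr V E \<Longrightarrow> lab (inscr V E) v = Lt A \<longleftrightarrow> v \<in> A"
proof -
  have "v \<noteq> hd cyc" using assms hd_notin_tl by blast
  then have unique: "B = A" if "A \<in> inscr V E" "B \<in> inscr V E" "v \<in> A" "v \<in> B" for A B
    using inscr_centre that by blast
  show "lab (inscr V E) v = Eps \<or> (\<exists>A\<in>inscr V E. lab (inscr V E) v = Lt A)"
    using lab_in_unique_clique lab_outside_cliques unique by metis
  show "lab (inscr V E) v = Lt A \<longleftrightarrow> v \<in> A" if "A \<in> inscr V E"
    using lab_in_unique_clique lab_outside_cliques unique that by (metis letter.distinct(3) letter.inject)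
qed

lemma tail_word_letters: "x \<in> set tail_word \<Longrightarrow> x = Eps \<or> (\<exists>A\<in>inscr V E. x = Lt A)"
  using lab_off_centre(1) by auto

text \<open>Reading the closed rim with \<open>hd cyc\<close> relabelled \<open>Lt A\<close> marks exactly the vertices of \<open>A\<close>;
  consecutive marks are the ends of an \<open>A\<close>-path, which has an even number of vertices by (N1)
  for the sub-multisun keeping only \<open>A\<close>.\<close>
lemma closed_word_gap:
  assumes A: "A \<in> inscr V E"
    and split: "Lt A # tail_word @ [Lt A] = u @ Lt A # m @ Lt A # v" and "Lt A \<notin> set m"
  shows "even (length m)"
proof -
  let ?f = "\<lambda>w. if w = hd cyc then Lt A else lab (inscr V E) w"
  have marks: "?f w = Lt A \<longleftrightarrow> w \<in> A" if "w \<in> set (cyc @ [hd cyc])" for w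
    using that lab_off_centre(2)[OF _ A] inscr_centre(1)[OF A] unfolding set_closed_rim
    by (cases "w = hd cyc") auto
  have tail: "map ?f (tl cyc) = tail_word" using hd_notin_tl by (intro map_cong) auto
  have "map ?f (cyc @ [hd cyc]) = Lt A # map ?f (tl cyc) @ [Lt A]" unfolding closed_rim by simp
  also have "\<dots> = u @ Lt A # m @ Lt A # v" unfolding tail by (rule split)
  finally obtain u' a m' b v' where c: "cyc @ [hd cyc] = u' @ a # m' @ b # v'"
    and "map ?f u' = u" "?f a = Lt A" "map ?f m' = m" "?f b = Lt A" "map ?f v' = v"
    by (rule map_eq_append_Cons_append_ConsE)
  then have "a \<in> set (cyc @ [hd cyc])" "b \<in> set (cyc @ [hd cyc])" by (simp_all add: c)
  then have ends: "a \<in> A" "b \<in> A" using marks \<open>?f a = Lt A\<close> \<open>?f b = Lt A\<close> by simp_all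
  have inner: "\<forall>z\<in>set m'. z \<notin> \<Union>{A}"
  proof
    fix z assume "z \<in> set m'"
    then have "?f z \<in> ?f ` set m'" by (rule imageI)
    then have "?f z \<in> set m" unfolding \<open>map ?f m' = m\<close>[symmetric] set_map .
    then have "?f z \<noteq> Lt A" using \<open>Lt A \<notin> set m\<close> by metis
    moreover have "z \<in> set (cyc @ [hd cyc])" using \<open>z \<in> set m'\<close> by (simp add: c)
    ultimately show "z \<notin> \<Union>{A}" using marks by simp
  qed
  show ?thesis
  proof (cases "length m' + 2 \<le> length cyc")
    case True
    have path: "end_path {A} cyc A A (length u') (length m' + 2)"
      by (rule end_path_closed_split[OF c True ends inner])
    have "N_conds V {A} cyc" by (rule sunoid_N_conds[OF sunoid rim]) (use A in auto)
    then have "even (length m' + 2)" by (rule N_conds_A_path[OF _ _ path]) simp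
    then show ?thesis using \<open>map ?f m' = m\<close> by auto
  next
    case False
    txt \<open>The gap is the whole tail word, of even length since the rim has odd length.\<close>
    have "length cyc + 1 = length u' + length m' + length v' + 2" using arg_cong[OF c, of length] by simp
    moreover have "length m = length m'" using \<open>map ?f m' = m\<close> by auto
    ultimately have "length cyc = Suc (length m)" using False by linarith
    then show ?thesis using odd_length by simp
  qed
qed

lemma tail_word_parity:
  assumes "A \<in> inscr V E" "tail_word = u @ Lt A # v"
  shows "even (length u + count_list u (Lt A))"
proof -
  have split: "Lt A # tail_word @ [Lt A] = (Lt A # u) @ Lt A # (v @ [Lt A])" using assms(2) by simp
  have "even (length (Lt A # u) + count_list (Lt A # u) (Lt A))"
    by (rule occurrence_parity[OF _ closed_word_gap[OF assms(1)] split]) simp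
  then show ?thesis by simp
qed

lemma tail_word_count:
  assumes "A \<in> inscr V E"
  shows "even (count_list tail_word (Lt A))"
proof -
  have split: "Lt A # tail_word @ [Lt A] = (Lt A # tail_word) @ Lt A # []" by simp
  have "even (length (Lt A # tail_word) + count_list (Lt A # tail_word) (Lt A))"
    by (rule occurrence_parity[OF _ closed_word_gap[OF assms] split]) simp
  moreover have "0 < length cyc" using odd_length by (rule odd_pos)
  then have "length tail_word + 1 = length cyc" by simp
  ultimately show ?thesis using odd_length by simp
qed

text \<open>Between an occurrence of \<open>Lt A\<close> and the next occurrence of \<open>Lt B\<close> lies an \<open>AB\<close>-path,
  with an odd number of vertices by (N5) for the sub-multisun keeping only \<open>A\<close> and \<open>B\<close>.\<close>
lemma tail_word_gap:
  assumes A: "A \<in> inscr V E" and B: "B \<in> inscr V E" and "A \<noteq> B"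
    and split: "tail_word = u @ Lt A # m @ Lt B # v" and "Lt A \<notin> set m" "Lt B \<notin> set m"
  shows "odd (length m)"
proof -
  have "map (lab (inscr V E)) (cyc @ [hd cyc]) = (Sig # u) @ Lt A # m @ Lt B # v @ [Sig]"
    using split hd_Sig unfolding closed_rim by simp
  then obtain u' a m' b v' where c: "cyc @ [hd cyc] = u' @ a # m' @ b # v'"
    and lab: "map (lab (inscr V E)) u' = Sig # u" "lab (inscr V E) a = Lt A"
      "map (lab (inscr V E)) m' = m" "lab (inscr V E) b = Lt B" "map (lab (inscr V E)) v' = v @ [Sig]"
    by (rule map_eq_append_Cons_append_ConsE)
  have in_tail: "w \<in> set (tl cyc)" if "w \<in> set (cyc @ [hd cyc])" "lab (inscr V E) w \<noteq> Sig" for w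
    using that hd_Sig unfolding set_closed_rim by auto
  have a: "a \<in> set (tl cyc)" and b: "b \<in> set (tl cyc)"
    using in_tail lab(2,4) unfolding c by simp_all
  have ends: "a \<in> A - B" "b \<in> B - A"
    using lab_off_centre(2)[OF a A] lab_off_centre(2)[OF a B] lab_off_centre(2)[OF b A]
      lab_off_centre(2)[OF b B] lab(2,4) \<open>A \<noteq> B\<close> by simp_all
  have inner: "\<forall>z\<in>set m'. z \<notin> \<Union>{A, B}"
  proof
    fix z assume "z \<in> set m'"
    then have "lab (inscr V E) z \<in> lab (inscr V E) ` set m'" by (rule imageI)
    then have "lab (inscr V E) z \<in> set m" unfolding lab(3)[symmetric] set_map .
    moreover have "set m \<subseteq> set tail_word" unfolding split by auto
    ultimately have "lab (inscr V E) z \<in> set tail_word" by blast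
    then have z_lab: "lab (inscr V E) z \<noteq> Sig" using tail_word_letters by fastforce
    have "lab (inscr V E) z \<noteq> Lt A" "lab (inscr V E) z \<noteq> Lt B"
      using \<open>lab (inscr V E) z \<in> set m\<close> \<open>Lt A \<notin> set m\<close> \<open>Lt B \<notin> set m\<close> by auto
    moreover have "z \<in> set (tl cyc)" using in_tail[OF _ z_lab] \<open>z \<in> set m'\<close> unfolding c by simp
    ultimately show "z \<notin> \<Union>{A, B}" using lab_off_centre(2)[OF _ A] lab_off_centre(2)[OF _ B] by simp
  qed
  have len: "length m' + 2 \<le> length cyc"
    using arg_cong[OF c, of length] arg_cong[OF lab(1), of length] arg_cong[OF lab(5), of length] by simp
  have path: "end_path {A, B} cyc (A - B) (B - A) (length u') (length m' + 2)"
    by (rule end_path_closed_split[OF c len ends inner])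
  have "N_conds V {A, B} cyc" by (rule sunoid_N_conds[OF sunoid rim]) (use A B in auto)
  then have "odd (length m' + 2)" by (rule N_conds_AB_path[OF _ _ _ \<open>A \<noteq> B\<close> path]) simp_all
  then show ?thesis using lab(3) by auto
qed

lemma even_counts_tail_word: "even_counts (filter proper tail_word)"
proof (rule even_counts_filter)
  fix x :: "'v letter" assume "proper x"
  show "even (count_list tail_word x)"
  proof (cases "x \<in> set tail_word")
    case True
    then obtain A where "A \<in> inscr V E" "x = Lt A"
      using tail_word_letters \<open>proper x\<close> unfolding proper_def by blast
    then show ?thesis using tail_word_count by simp
  qed simp
qed

lemma even_switches_tail_word: "even_switches (filter proper tail_word)"
proof (rule even_switches_filter)
  have clique_letter: "\<exists>A\<in>inscr V E. x = Lt A" if "x \<in> set tail_word" "proper x" for x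
    using tail_word_letters that unfolding proper_def by blast
  show "even (length u + count_list u x)" if split: "tail_word = u @ x # v" and "proper x" for u x v
  proof -
    have "x \<in> set tail_word" using split by simp
    then obtain A where "A \<in> inscr V E" "x = Lt A"
      using clique_letter[of x] \<open>proper x\<close> by blast
    from split show ?thesis unfolding \<open>x = Lt A\<close> by (rule tail_word_parity[OF \<open>A \<in> inscr V E\<close>])
  qed
  show "odd (length m)" if split: "tail_word = u @ x # m @ y # v" and "proper x" "proper y"
    and "x \<noteq> y" "x \<notin> set m" "y \<notin> set m" for u x m y v
  proof -
    have "x \<in> set tail_word" "y \<in> set tail_word" using split by simp_all
    obtain A where A: "A \<in> inscr V E" "x = Lt A"
      using clique_letter[OF \<open>x \<in> set tail_word\<close> \<open>proper x\<close>] by blast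
    obtain B where B: "B \<in> inscr V E" "y = Lt B"
      using clique_letter[OF \<open>y \<in> set tail_word\<close> \<open>proper y\<close>] by blast
    have "A \<noteq> B" using \<open>x \<noteq> y\<close> A(2) B(2) by simp
    from split \<open>x \<notin> set m\<close> \<open>y \<notin> set m\<close> show ?thesis
      unfolding A(2) B(2) by (rule tail_word_gap[OF A(1) B(1) \<open>A \<noteq> B\<close>])
  qed
qed

end

section \<open>Reduced representatives of the s-word\<close>

lemma pat_Cons: "x \<noteq> Eps \<Longrightarrow> pat (x # xs) = x # pat xs"
  by (cases x) simp_all

lemma pat_Eps_Cons: "y \<noteq> Eps \<Longrightarrow> pat (Eps # y # ys) = Eps # pat (y # ys)"
  by (cases y) simp_all

lemma pat_replicate_append: "x \<noteq> Eps \<Longrightarrow> pat (replicate l x @ ys) = replicate l x @ pat ys"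
  by (induction l) (simp_all add: pat_Cons)

lemma filter_proper_pat: "filter proper (pat w) = filter proper w"
  by (induction w rule: pat.induct) (auto simp: proper_def)

lemma set_pat: "set (pat w) \<subseteq> set w"
  by (induction w rule: pat.induct) auto

lemma blocks_Cons: "0 < l \<Longrightarrow> \<exists>t. blocks ((x, l) # bs) = x # t"
  by (cases bs; cases l) auto

lemma pat_blocks: "\<forall>(x, l)\<in>set bs. proper x \<and> 0 < l \<Longrightarrow> pat (blocks bs) = blocks bs"
proof (induction bs rule: blocks.induct)
  case 1
  then show ?case by simp
next
  case (2 x l)
  then show ?case using pat_replicate_append[of x l "[]"] by (simp add: proper_def)
next
  case (3 x l b bs)
  obtain y k where b: "b = (y, k)" by fastforce
  then have "0 < k" "y \<noteq> Eps" using "3.prems" by (auto simp: proper_def)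
  then obtain t where t: "blocks (b # bs) = y # t" using blocks_Cons b by blast
  have "pat (Eps # blocks (b # bs)) = Eps # blocks (b # bs)"
    using "3.IH" "3.prems" pat_Eps_Cons[OF \<open>y \<noteq> Eps\<close>] unfolding t by simp
  moreover have "x \<noteq> Eps" using "3.prems" by (simp add: proper_def)
  ultimately show ?case using pat_replicate_append[of x l "Eps # blocks (b # bs)"] by simp
qed

lemma sword_reading:
  assumes sun: "sunoid V E" and r: "r \<in> sword V E" "r = Sig # t" "pat r = r"
  obtains cyc where "sunoid_reading V E cyc"
    "filter proper t = filter proper (map (lab (inscr V E)) (tl cyc)) \<or>
     filter proper t = rev (filter proper (map (lab (inscr V E)) (tl cyc)))"
proof -
  let ?lab = "lab (inscr V E)"
  obtain cyc where rim: "is_rim V E cyc"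
    and hd_Sig: "(\<exists>v\<in>V. ?lab v = Sig) \<longrightarrow> ?lab (hd cyc) = Sig"
    and "wapprox (map ?lab cyc) r"
    using r(1) unfolding sword_def by blast
  then obtain k where rk: "r = rotate k (pat (map ?lab cyc)) \<or> r = rotate k (rev (pat (map ?lab cyc)))"
    using r(3) unfolding wapprox_def wsim_def by metis
  moreover have "Sig \<in> set r" using r(2) by simp
  ultimately have "Sig \<in> set (pat (map ?lab cyc))" by auto
  then have "Sig \<in> set (map ?lab cyc)" using set_pat by blast
  then obtain v where "v \<in> set cyc" "?lab v = Sig" by auto
  then have "\<exists>v\<in>V. ?lab v = Sig" using rim unfolding is_rim_def by blast
  then have reading: "sunoid_reading V E cyc" using sun rim hd_Sig by unfold_locales blast+
  txt \<open>\<open>\<sigma>\<close> occurs only at the common vertex, so the rotation is determined.\<close>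
  define q where "q = pat (map ?lab (tl cyc))"
  have "map ?lab cyc = map ?lab (hd cyc # tl cyc)"
    using sunoid_reading.cyc_Cons[OF reading] by (rule arg_cong)
  then have "pat (map ?lab cyc) = Sig # q"
    using sunoid_reading.hd_Sig[OF reading] unfolding q_def by (simp add: pat_Cons)
  moreover have "Sig \<notin> set q"
    using set_pat sunoid_reading.tail_word_letters[OF reading] unfolding q_def by fastforce
  ultimately have "t = q \<or> t = rev q"
    using rk r(2) rotate_eq_Cons_unique[of "[] @ Sig # q" "[]" Sig q k t]
      rotate_eq_Cons_unique[of "rev q @ Sig # []" "rev q" Sig "[]" k t] by auto
  then have "filter proper t = filter proper (map ?lab (tl cyc)) \<or>
      filter proper t = rev (filter proper (map ?lab (tl cyc)))"
    unfolding q_def by (auto simp: filter_proper_pat simp flip: rev_filter)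
  then show ?thesis using reading that by blast
qed

theorem theorem4:
  fixes W :: "'v letter list set"
  assumes "sunword W"
  shows "jump_free W"
proof -
  obtain V :: "'v set" and E where sun: "sunoid V E" and W: "W = sword V E"
    using assms unfolding sunword_def by blast
  show ?thesis
    unfolding jump_free_def Let_def
  proof (intro ballI allI impI)
    fix r bs h
    assume "r \<in> W" and "r = Sig # blocks bs \<and> (\<forall>(x, l)\<in>set bs. proper x \<and> 0 < l)"
      and "h \<le> length bs"
    then have r: "r \<in> sword V E" "r = Sig # blocks bs" and blocks: "\<forall>(x, l)\<in>set bs. proper x \<and> 0 < l"
      using W by auto
    then have "pat r = r" using pat_blocks by (simp add: pat_Cons)
    then obtain cyc where reading: "sunoid_reading V E cyc" and
      "filter proper (blocks bs) = filter proper (map (lab (inscr V E)) (tl cyc)) \<or>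
       filter proper (blocks bs) = rev (filter proper (map (lab (inscr V E)) (tl cyc)))"
      using sword_reading[OF sun r] by blast
    then have "even_counts (filter proper (blocks bs))" "even_switches (filter proper (blocks bs))"
      using sunoid_reading.even_counts_tail_word[OF reading]
        sunoid_reading.even_switches_tail_word[OF reading] even_counts_rev even_switches_rev
      by auto
    then show "cover_pair r ((Sig # map fst bs) ! h) ((Sig # map fst bs) ! ((h + 1) mod (length bs + 1)))"
      using cover_pairs_of_blocks[OF blocks _ _ \<open>h \<le> length bs\<close>] r(2) by simp
  qed
qed

end
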